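(* Let $L$ be an $n$-dimensional nilpotent Lie algebra. If $\dim\mathcal{M}^{(2)}(L)=\frac13 n(n-1)(n+1)$, then $L\cong A(n)$.
   Context: All Lie algebras are over a fixed field. For a Lie algebra $L$ with free presentation $L\cong F/R$, the $2$-nilpotent multiplier is $\mathcal{M}^{(2)}(L)=(R\cap F^{3})/[[R,F],F]$, where $F^3=[[F,F],F]$. $A(n)$ denotes the abelian Lie algebra of dimension $n$. *)

theory Defs
  imports Complex_Main
begin

section \<open>Lie algebras over a field (the whole type 'v is the underlying vector space)\<close>

definition lie_algebra :: "('k::field \<Rightarrow> 'v::ab_group_add \<Rightarrow> 'v) \<Rightarrow> ('v \<Rightarrow> 'v \<Rightarrow> 'v) \<Rightarrow> bool" where
  "lie_algebra scale br \<longleftrightarrow> vector_space scale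
     \<and> (\<forall>x y z. br (x + y) z = br x z + br y z)
     \<and> (\<forall>x y z. br x (y + z) = br x y + br x z)
     \<and> (\<forall>c x y. br (scale c x) y = scale c (br x y))
     \<and> (\<forall>c x y. br x (scale c y) = scale c (br x y))
     \<and> (\<forall>x. br x x = 0)
     \<and> (\<forall>x y z. br x (br y z) + br y (br z x) + br z (br x y) = 0)"

definition lie_dim_eq :: "('k::field \<Rightarrow> 'v::ab_group_add \<Rightarrow> 'v) \<Rightarrow> nat \<Rightarrow> bool" where
  "lie_dim_eq scale n \<longleftrightarrow> (\<exists>B. finite B \<and> module.span scale B = UNIV) \<and> vector_space.dim scale UNIV = n"

text \<open>Lower central series: L^1 = L (index 0 here), L^{i+1} = [L^i, L].\<close>
primrec lower_central :: "('k::field \<Rightarrow> 'v::ab_group_add \<Rightarrow> 'v) \<Rightarrow> ('v \<Rightarrow> 'v \<Rightarrow> 'v) \<Rightarrow> nat \<Rightarrow> 'v set" where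
  "lower_central scale br 0 = UNIV"
| "lower_central scale br (Suc i) = module.span scale {br x y | x y. x \<in> lower_central scale br i}"

definition lie_nilpotent :: "('k::field \<Rightarrow> 'v::ab_group_add \<Rightarrow> 'v) \<Rightarrow> ('v \<Rightarrow> 'v \<Rightarrow> 'v) \<Rightarrow> bool" where
  "lie_nilpotent scale br \<longleftrightarrow> (\<exists>c. lower_central scale br c = {0})"

text \<open>The abelian Lie algebra A(n): carrier k^n, realised as functions nat => k vanishing
  outside {..<n}, pointwise linear structure and zero bracket.\<close>
definition abelian_carrier :: "nat \<Rightarrow> (nat \<Rightarrow> 'k::field) set" where
  "abelian_carrier n = {v. \<forall>i\<ge>n. v i = 0}"

definition iso_to_abelian :: "('k::field \<Rightarrow> 'v::ab_group_add \<Rightarrow> 'v) \<Rightarrow> ('v \<Rightarrow> 'v \<Rightarrow> 'v) \<Rightarrow> nat \<Rightarrow> bool" where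
  "iso_to_abelian scale br n \<longleftrightarrow> (\<exists>f :: 'v \<Rightarrow> nat \<Rightarrow> 'k.
      bij_betw f UNIV (abelian_carrier n)
    \<and> (\<forall>x y. f (x + y) = (\<lambda>i. f x i + f y i))
    \<and> (\<forall>c x. f (scale c x) = (\<lambda>i. c * f x i))
    \<and> (\<forall>x y. f (br x y) = (\<lambda>i. 0)))"

section \<open>Free Lie algebra on the generators 'x, realised inside the free associative
  algebra k<'x> (Witt): noncommutative polynomials = finitely supported functions on words\<close>

definition fa_mult :: "('x list \<Rightarrow> 'k::field) \<Rightarrow> ('x list \<Rightarrow> 'k) \<Rightarrow> ('x list \<Rightarrow> 'k)" where
  "fa_mult p q = (\<lambda>w. \<Sum>i\<le>length w. p (take i w) * q (drop i w))"

definition fa_comm :: "('x list \<Rightarrow> 'k::field) \<Rightarrow> ('x list \<Rightarrow> 'k) \<Rightarrow> ('x list \<Rightarrow> 'k)" where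
  "fa_comm p q = (\<lambda>w. fa_mult p q w - fa_mult q p w)"

definition fa_gen :: "'x \<Rightarrow> ('x list \<Rightarrow> 'k::field)" where
  "fa_gen x = (\<lambda>w. if w = [x] then 1 else 0)"

definition fa_scale :: "'k::field \<Rightarrow> ('x list \<Rightarrow> 'k) \<Rightarrow> ('x list \<Rightarrow> 'k)" where
  "fa_scale c p = (\<lambda>w. c * p w)"

definition fa_add :: "('x list \<Rightarrow> 'k::field) \<Rightarrow> ('x list \<Rightarrow> 'k) \<Rightarrow> ('x list \<Rightarrow> 'k)" where
  "fa_add p q = (\<lambda>w. p w + q w)"

inductive_set fa_span :: "('x list \<Rightarrow> 'k::field) set \<Rightarrow> ('x list \<Rightarrow> 'k) set" for S where
  base: "p \<in> S \<Longrightarrow> p \<in> fa_span S"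
| zero: "(\<lambda>w. 0) \<in> fa_span S"
| add: "p \<in> fa_span S \<Longrightarrow> q \<in> fa_span S \<Longrightarrow> fa_add p q \<in> fa_span S"
| scale: "p \<in> fa_span S \<Longrightarrow> fa_scale c p \<in> fa_span S"

inductive_set free_lie :: "('x list \<Rightarrow> 'k::field) set" where
  gen: "fa_gen x \<in> free_lie"
| zero: "(\<lambda>w. 0) \<in> free_lie"
| add: "p \<in> free_lie \<Longrightarrow> q \<in> free_lie \<Longrightarrow> fa_add p q \<in> free_lie"
| scale: "p \<in> free_lie \<Longrightarrow> fa_scale c p \<in> free_lie"
| comm: "p \<in> free_lie \<Longrightarrow> q \<in> free_lie \<Longrightarrow> fa_comm p q \<in> free_lie"

definition fa_bracket_sp :: "('x list \<Rightarrow> 'k::field) set \<Rightarrow> ('x list \<Rightarrow> 'k) set \<Rightarrow> ('x list \<Rightarrow> 'k) set" where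
  "fa_bracket_sp A B = fa_span {fa_comm a b | a b. a \<in> A \<and> b \<in> B}"

definition free_presentation ::
  "('k::field \<Rightarrow> 'v::ab_group_add \<Rightarrow> 'v) \<Rightarrow> ('v \<Rightarrow> 'v \<Rightarrow> 'v) \<Rightarrow> (('x list \<Rightarrow> 'k) \<Rightarrow> 'v) \<Rightarrow> bool" where
  "free_presentation scale br \<pi> \<longleftrightarrow>
     (\<forall>p\<in>free_lie. \<forall>q\<in>free_lie. \<pi> (fa_add p q) = \<pi> p + \<pi> q)
   \<and> (\<forall>c. \<forall>p\<in>free_lie. \<pi> (fa_scale c p) = scale c (\<pi> p))
   \<and> (\<forall>p\<in>free_lie. \<forall>q\<in>free_lie. \<pi> (fa_comm p q) = br (\<pi> p) (\<pi> q))
   \<and> \<pi> ` free_lie = UNIV"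

text \<open>dim (B/A) = m for subspaces A of B (of k<'x>): there is a finite family S in B of
  card m, linearly independent modulo A, with B contained in span (A \<union> S).\<close>
definition fa_quot_dim_eq :: "('x list \<Rightarrow> 'k::field) set \<Rightarrow> ('x list \<Rightarrow> 'k) set \<Rightarrow> nat \<Rightarrow> bool" where
  "fa_quot_dim_eq B A m \<longleftrightarrow> (\<exists>S. S \<subseteq> B \<and> finite S \<and> card S = m
     \<and> B \<subseteq> fa_span (A \<union> S)
     \<and> (\<forall>c. (\<lambda>w. \<Sum>s\<in>S. c s * s w) \<in> A \<longrightarrow> (\<forall>s\<in>S. c s = 0)))"

text \<open>dim M^(2)(L) = m, computed from the presentation \<pi> : F -> L with R = ker \<pi>:
  M^(2)(L) = (R \<inter> F^3) / [[R,F],F].\<close>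
definition two_nilpotent_multiplier_dim_eq ::
  "('k::field \<Rightarrow> 'v::ab_group_add \<Rightarrow> 'v) \<Rightarrow> ('v \<Rightarrow> 'v \<Rightarrow> 'v) \<Rightarrow> (('x list \<Rightarrow> 'k) \<Rightarrow> 'v) \<Rightarrow> nat \<Rightarrow> bool" where
  "two_nilpotent_multiplier_dim_eq scale br \<pi> m \<longleftrightarrow>
     (let F = (free_lie :: ('x list \<Rightarrow> 'k) set);
          R = {p \<in> F. \<pi> p = 0};
          F3 = fa_bracket_sp (fa_bracket_sp F F) F;
          RFF = fa_bracket_sp (fa_bracket_sp R F) F
      in fa_quot_dim_eq (R \<inter> F3) RFF m)"

end

theory Submission
  imports Defs "HOL-Library.Function_Algebras"
begin

text \<open>A nilpotent non-abelian \<open>L\<close> has a nonzero central element \<open>z \<in> L\<^sup>2\<close>. Complete it to a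
  basis \<open>e\<^sub>0, \<dots>, e\<^sub>n\<^sub>-\<^sub>1 = z\<close> of \<open>L\<close> and lift the basis to \<open>l\<^sub>0, \<dots>, l\<^sub>n\<^sub>-\<^sub>1 \<in> F\<close> with
  \<open>l\<^sub>n\<^sub>-\<^sub>1 \<in> F\<^sup>2\<close>. Since the \<open>l\<^sub>i\<close> span \<open>F\<close> modulo \<open>R\<close>, trilinearity, antisymmetry and the Jacobi
  identity show that \<open>F\<^sup>3\<close> is spanned modulo \<open>[[R,F],F]\<close> by the \<open>(n\<^sup>3 - n)/3\<close> basic commutators
  \<open>[[l\<^sub>i,l\<^sub>j],l\<^sub>k]\<close> with \<open>i > j \<le> k\<close>. One of them, \<open>[[l\<^sub>n\<^sub>-\<^sub>1,l\<^sub>0],l\<^sub>n\<^sub>-\<^sub>1]\<close>, already lies in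
  \<open>[[R,F],F]\<close>: \<open>[l\<^sub>n\<^sub>-\<^sub>1,l\<^sub>0] \<in> R\<close> because \<open>z\<close> is central, and by Jacobi the bracket of an
  element of \<open>R\<close> with an element of \<open>F\<^sup>2\<close> lies in \<open>[[R,F],F]\<close>. Hence
  \<open>dim M\<^sup>(\<^sup>2\<^sup>)(L) < (n\<^sup>3 - n)/3\<close> unless \<open>L\<close> is abelian.\<close>

section \<open>Linear algebra\<close>

text \<open>Choosing \<open>g s \<in> span T\<close> with \<open>s - g s \<in> A\<close> gives an injection of \<open>S\<close> onto an independent
  subset of \<open>span T\<close>.\<close>
lemma (in vector_space) card_le_if_independent_modulo:
  assumes A: "subspace A" and fS: "finite S" and fT: "finite T"
    and sub: "S \<subseteq> span (A \<union> T)"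
    and ind: "\<And>c. (\<Sum>s\<in>S. scale (c s) s) \<in> A \<Longrightarrow> \<forall>s\<in>S. c s = 0"
  shows "card S \<le> card T"
proof -
  have "\<forall>s\<in>S. \<exists>t. t \<in> span T \<and> s - t \<in> A"
  proof
    fix s assume "s \<in> S"
    then have "s \<in> span (A \<union> T)" using sub by auto
    then obtain a t where "a \<in> span A" "t \<in> span T" "s = a + t"
      unfolding span_Un by auto
    moreover have "a \<in> A" using span_eq_iff[of A] A \<open>a \<in> span A\<close> by blast
    ultimately show "\<exists>t. t \<in> span T \<and> s - t \<in> A" by (intro exI[of _ t]) simp
  qed
  then obtain g where g: "\<And>s. s \<in> S \<Longrightarrow> g s \<in> span T \<and> s - g s \<in> A"
    by (metis bchoice)
  have inj: "inj_on g S"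
  proof (rule inj_onI, rule ccontr)
    fix s s' assume s: "s \<in> S" "s' \<in> S" "g s = g s'" "s \<noteq> s'"
    define c where "c x = (if x = s then 1 else if x = s' then -1 else (0 :: 'a))" for x
    have "(\<Sum>x\<in>S. scale (c x) x) = (\<Sum>x\<in>{s,s'}. scale (c x) x)"
      by (rule sum.mono_neutral_right) (use s fS in \<open>auto simp: c_def\<close>)
    also have "\<dots> = (s - g s) - (s' - g s')" using s by (simp add: c_def scale_minus_left)
    also have "\<dots> \<in> A" by (rule subspace_diff[OF A]) (use g s(1,2) in blast)+
    finally have "c s = 0" using ind s(1) by blast
    then show False by (simp add: c_def)
  qed
  have indep: "independent (g ` S)"
  proof
    assume "dependent (g ` S)"
    then obtain u v where uv: "v \<in> g ` S" "u v \<noteq> 0" "(\<Sum>v\<in>g ` S. scale (u v) v) = 0"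
      using dependent_finite[of "g ` S"] fS by auto
    have "(\<Sum>s\<in>S. scale (u (g s)) s) =
        (\<Sum>s\<in>S. scale (u (g s)) (s - g s)) + (\<Sum>s\<in>S. scale (u (g s)) (g s))"
      unfolding sum.distrib[symmetric] by (rule sum.cong) (simp_all add: scale_right_diff_distrib)
    also have "(\<Sum>s\<in>S. scale (u (g s)) (g s)) = (\<Sum>v\<in>g ` S. scale (u v) v)"
      by (rule sum.reindex[OF inj, symmetric, unfolded comp_def])
    finally have "(\<Sum>s\<in>S. scale (u (g s)) s) = (\<Sum>s\<in>S. scale (u (g s)) (s - g s))"
      by (simp only: uv add_0_right)
    also have "\<dots> \<in> A"
      by (intro subspace_sum[OF A] subspace_scale[OF A]) (use g in blast)
    finally have "\<forall>s\<in>S. u (g s) = 0" by (rule ind)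
    then show False using uv by auto
  qed
  have "card (g ` S) \<le> card T"
    using independent_span_bound[OF fT indep] g by auto
  then show ?thesis using card_image[OF inj] by simp
qed

lemma (in vector_space) finite_card_basis_if_dim_eq:
  assumes dim: "lie_dim_eq scale n" and B: "independent B" "span B = UNIV"
  shows "finite B" "card B = n"
proof -
  obtain Bf where Bf: "finite Bf" "span Bf = UNIV" and dn: "dim UNIV = n"
    using dim unfolding lie_dim_eq_def by blast
  show "finite B" using independent_span_bound[OF Bf(1) B(1)] Bf(2) by auto
  show "card B = n" using basis_card_eq_dim[of B UNIV] B dn by auto
qed

lemma (in vector_space) representation_sum_scale_basis:
  assumes B: "independent B" and h: "inj_on h I" "h ` I \<subseteq> B" and I: "finite I" "j \<in> I"
  shows "representation B (\<Sum>i\<in>I. scale (v i) (h i)) (h j) = v j"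
proof -
  have hB: "h i \<in> B" if "i \<in> I" for i using h(2) that by blast
  have "representation B (\<Sum>i\<in>I. scale (v i) (h i)) = (\<lambda>b. \<Sum>i\<in>I. representation B (scale (v i) (h i)) b)"
    using hB by (intro representation_sum[OF B]) (simp add: span_base span_scale)
  then have "representation B (\<Sum>i\<in>I. scale (v i) (h i)) (h j) = (\<Sum>i\<in>I. v i * representation B (h i) (h j))"
    using hB by (simp add: representation_scale[OF B] span_base)
  also have "\<dots> = (\<Sum>i\<in>I. v i * (if h j = h i then 1 else 0))"
    using hB by (intro sum.cong refl) (simp add: representation_basis[OF B])
  also have "\<dots> = (\<Sum>i\<in>{j}. v i)"
    by (rule sum.mono_neutral_cong_right) (use I h(1) in \<open>auto simp: inj_on_def\<close>)
  finally show ?thesis by simp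
qed

section \<open>The free associative algebra\<close>

lemma fa_add_eq: "fa_add p q = p + q"
  by (simp add: fa_add_def fun_eq_iff)

lemma fa_mult_add_left: "fa_mult (p + q) r = fa_mult p r + fa_mult q r"
  by (simp add: fa_mult_def fun_eq_iff algebra_simps sum.distrib)

lemma fa_mult_add_right: "fa_mult r (p + q) = fa_mult r p + fa_mult r q"
  by (simp add: fa_mult_def fun_eq_iff algebra_simps sum.distrib)

lemma fa_mult_diff_left: "fa_mult (p - q) r = fa_mult p r - fa_mult q r"
  by (simp add: fa_mult_def fun_eq_iff algebra_simps sum_subtractf)

lemma fa_mult_diff_right: "fa_mult r (p - q) = fa_mult r p - fa_mult r q"
  by (simp add: fa_mult_def fun_eq_iff algebra_simps sum_subtractf)

lemma fa_mult_scale_left: "fa_mult (fa_scale c p) q = fa_scale c (fa_mult p q)"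
  by (simp add: fa_mult_def fa_scale_def fun_eq_iff algebra_simps sum_distrib_left)

lemma fa_mult_scale_right: "fa_mult q (fa_scale c p) = fa_scale c (fa_mult q p)"
  by (simp add: fa_mult_def fa_scale_def fun_eq_iff algebra_simps sum_distrib_left)

text \<open>Both sides are the sum of \<open>p(u) q(v) r(x)\<close> over all factorisations \<open>w = u v x\<close>; the
  factorisations are indexed by pairs \<open>j \<le> i\<close> of cut positions, summed in either order.\<close>
lemma fa_mult_assoc: "fa_mult (fa_mult p q) r = fa_mult p (fa_mult q r)"
proof (rule ext)
  fix w :: "'a list"
  define L where "L = length w"
  define g where "g j i = p (take j w) * q (take (i - j) (drop j w)) * r (drop i w)" for j i
  have "fa_mult (fa_mult p q) r w = (\<Sum>i\<le>L. \<Sum>j\<in>{j\<in>{..L}. j \<le> i}. g j i)"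
    unfolding fa_mult_def L_def
  proof (rule sum.cong[OF refl])
    fix i assume i: "i \<in> {..length w}"
    have cuts: "{j\<in>{..length w}. j \<le> i} = {..i}" using i by auto
    show "(\<Sum>j\<le>length (take i w). p (take j (take i w)) * q (drop j (take i w))) * r (drop i w) =
       (\<Sum>j\<in>{j\<in>{..length w}. j \<le> i}. g j i)"
      unfolding cuts using i
      by (auto simp: g_def sum_distrib_right min_def take_drop intro!: sum.cong)
  qed
  also have "\<dots> = (\<Sum>j\<le>L. \<Sum>i\<in>{i\<in>{..L}. j \<le> i}. g j i)"
    by (rule sum.swap_restrict) auto
  also have "\<dots> = fa_mult p (fa_mult q r) w"
    unfolding fa_mult_def L_def
  proof (rule sum.cong[OF refl])
    fix j assume j: "j \<in> {..length w}"
    have "(\<Sum>i\<in>{i\<in>{..length w}. j \<le> i}. g j i) = (\<Sum>i\<in>{j..length w}. g j i)"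
      by (rule sum.cong) auto
    also have "\<dots> = (\<Sum>l\<in>{0..length w - j}. g j (l + j))"
      using sum.shift_bounds_cl_nat_ivl[of "g j" 0 j "length w - j"] j by simp
    also have "\<dots> = (\<Sum>l\<le>length (drop j w). g j (l + j))"
      by (simp add: atLeast0AtMost)
    finally show "(\<Sum>i\<in>{i\<in>{..length w}. j \<le> i}. g j i) =
        p (take j w) * (\<Sum>l\<le>length (drop j w). q (take l (drop j w)) * r (drop l (drop j w)))"
      by (simp add: g_def sum_distrib_left mult.assoc add.commute)
  qed
  finally show "fa_mult (fa_mult p q) r w = fa_mult p (fa_mult q r) w" .
qed

lemma fa_comm_eq: "fa_comm p q = fa_mult p q - fa_mult q p"
  by (simp add: fa_comm_def fun_eq_iff)

lemma fa_comm_swap: "fa_comm q p = - fa_comm p q"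
  by (simp add: fa_comm_eq)

lemma fa_comm_self: "fa_comm p p = 0"
  by (simp add: fa_comm_eq)

lemma fa_comm_zero_left: "fa_comm 0 q = 0"
  by (simp add: fa_comm_eq fa_mult_def fun_eq_iff)

lemma fa_comm_neg_left: "fa_comm (- p) q = - fa_comm p q"
  by (simp add: fa_comm_eq fa_mult_def fun_eq_iff sum_negf)

lemma fa_comm_add_left: "fa_comm (p + q) r = fa_comm p r + fa_comm q r"
  by (simp add: fa_comm_eq fa_mult_add_left fa_mult_add_right)

lemma fa_comm_add_right: "fa_comm r (p + q) = fa_comm r p + fa_comm r q"
  by (simp add: fa_comm_eq fa_mult_add_left fa_mult_add_right)

lemma fa_scale_diff: "fa_scale c (p - q) = fa_scale c p - fa_scale c q"
  by (simp add: fa_scale_def fun_eq_iff algebra_simps)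

lemma fa_comm_scale_left: "fa_comm (fa_scale c p) q = fa_scale c (fa_comm p q)"
  by (simp add: fa_comm_eq fa_mult_scale_left fa_mult_scale_right fa_scale_diff)

lemma fa_comm_scale_right: "fa_comm q (fa_scale c p) = fa_scale c (fa_comm q p)"
  by (simp add: fa_comm_eq fa_mult_scale_left fa_mult_scale_right fa_scale_diff)

lemma fa_jacobi: "fa_comm (fa_comm a b) c + fa_comm (fa_comm b c) a + fa_comm (fa_comm c a) b = 0"
  by (simp add: fa_comm_eq fa_mult_diff_left fa_mult_diff_right fa_mult_assoc)

interpretation fa: vector_space "fa_scale :: 'k::field \<Rightarrow> ('x list \<Rightarrow> 'k) \<Rightarrow> _"
  by unfold_locales (simp_all add: fa_scale_def fun_eq_iff algebra_simps)

lemma fa_span_eq: "fa_span S = fa.span S"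
proof
  show "fa_span S \<subseteq> fa.span S"
  proof
    fix p assume "p \<in> fa_span S" then show "p \<in> fa.span S"
    proof induct
      case (base p) then show ?case by (rule fa.span_base)
    next
      case zero then show ?case using fa.span_zero by (simp add: zero_fun_def)
    next
      case (add p q) then show ?case using fa.span_add[of p S q] by (simp add: plus_fun_def fa_add_def)
    next
      case (scale p c) then show ?case by (simp add: fa.span_scale)
    qed
  qed
  show "fa.span S \<subseteq> fa_span S"
  proof (rule fa.span_minimal)
    show "S \<subseteq> fa_span S" by (auto intro: fa_span.base)
    show "fa.subspace (fa_span S)"
      unfolding fa.subspace_def
      using fa_span.zero[of S] fa_span.add[of _ S] fa_span.scale[of _ S]
      by (auto simp: zero_fun_def fa_add_eq)
  qed
qed

lemma subspace_fa_bracket_sp: "fa.subspace (fa_bracket_sp A B)"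
  unfolding fa_bracket_sp_def fa_span_eq by simp

lemma fa_span_map_mem:
  assumes M: "fa.subspace M" and add: "\<And>x y. f (x + y) = f x + f y"
    and scale: "\<And>c x. f (fa_scale c x) = fa_scale c (f x)"
    and gen: "\<And>x. x \<in> G \<Longrightarrow> f x \<in> M" and x: "x \<in> fa.span G"
  shows "f x \<in> M"
  using x
proof (induction rule: fa.span_induct_alt)
  case base
  have "f 0 = f (fa_scale 0 0)" by (simp only: fa.scale_zero_left)
  also have "\<dots> = 0" by (subst scale) (rule fa.scale_zero_left)
  finally show ?case using fa.subspace_0[OF M] by (simp only:)
next
  case (step c x y)
  have "f (fa_scale c x + y) = fa_scale c (f x) + f y" by (simp only: add scale)
  moreover have "fa_scale c (f x) + f y \<in> M"
    using step gen[of x] fa.subspace_add[OF M] fa.subspace_scale[OF M] by blast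
  ultimately show ?case by (simp only:)
qed

lemma fa_sum_scale_eq: "(\<Sum>s\<in>S. fa_scale (c s) s) = (\<lambda>w. \<Sum>s\<in>S. c s * s w)"
  by (induction S rule: infinite_finite_induct) (auto simp: fa_scale_def fun_eq_iff)

section \<open>The free Lie algebra\<close>

lemma free_lie_zero: "0 \<in> free_lie"
  using free_lie.zero by (simp add: zero_fun_def)

lemma free_lie_add: "p \<in> free_lie \<Longrightarrow> q \<in> free_lie \<Longrightarrow> p + q \<in> free_lie"
  using free_lie.add by (simp add: fa_add_eq)

lemma free_lie_diff: "p \<in> free_lie \<Longrightarrow> q \<in> free_lie \<Longrightarrow> p - q \<in> free_lie"
  using free_lie_add[of p "fa_scale (-1) q"] free_lie.scale[of q "-1"]
  by (simp add: fa.scale_minus_left)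

lemma fa_span_subset_free_lie: "S \<subseteq> free_lie \<Longrightarrow> fa_span S \<subseteq> free_lie"
proof
  fix p assume S: "S \<subseteq> free_lie" and "p \<in> fa_span S"
  from this(2) show "p \<in> free_lie"
    by (induct rule: fa_span.induct) (use S in \<open>auto intro: free_lie.intros\<close>)
qed

lemma fa_bracket_sp_free_lie_subset: "fa_bracket_sp free_lie free_lie \<subseteq> free_lie"
  unfolding fa_bracket_sp_def by (rule fa_span_subset_free_lie) (auto intro: free_lie.comm)

section \<open>Triple commutators and the Hall basis\<close>

definition fa_comm3 :: "('x list \<Rightarrow> 'k::field) \<Rightarrow> ('x list \<Rightarrow> 'k) \<Rightarrow> ('x list \<Rightarrow> 'k) \<Rightarrow> ('x list \<Rightarrow> 'k)"
  where "fa_comm3 a b c = fa_comm (fa_comm a b) c"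

lemma fa_comm3_swap: "fa_comm3 b a c = - fa_comm3 a b c"
  unfolding fa_comm3_def by (metis fa_comm_swap fa_comm_neg_left)

lemma fa_comm3_jacobi: "fa_comm3 a b c = - fa_comm3 b c a - fa_comm3 c a b"
  using fa_jacobi[of a b c] unfolding fa_comm3_def
  by (simp add: eq_neg_iff_add_eq_0 algebra_simps)

lemma fa_comm3_add:
  "fa_comm3 (a + a') b c = fa_comm3 a b c + fa_comm3 a' b c"
  "fa_comm3 a (b + b') c = fa_comm3 a b c + fa_comm3 a b' c"
  "fa_comm3 a b (c + c') = fa_comm3 a b c + fa_comm3 a b c'"
  by (simp_all add: fa_comm3_def fa_comm_add_left fa_comm_add_right)

lemma fa_comm3_scale:
  "fa_comm3 (fa_scale s a) b c = fa_scale s (fa_comm3 a b c)"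
  "fa_comm3 a (fa_scale s b) c = fa_scale s (fa_comm3 a b c)"
  "fa_comm3 a b (fa_scale s c) = fa_scale s (fa_comm3 a b c)"
  by (simp_all add: fa_comm3_def fa_comm_scale_left fa_comm_scale_right)

lemma fa_comm3_relator_mem:
  "r \<in> R \<Longrightarrow> b \<in> free_lie \<Longrightarrow> c \<in> free_lie \<Longrightarrow>
    fa_comm3 r b c \<in> fa_bracket_sp (fa_bracket_sp R free_lie) free_lie"
  unfolding fa_bracket_sp_def fa_comm3_def by (intro fa_span.base) (blast intro: fa_span.base)

text \<open>A relator in the second or third slot is moved to the first by antisymmetry and Jacobi.\<close>
lemma fa_comm3_relator_slot_mem:
  assumes "a \<in> free_lie" "b \<in> free_lie" "c \<in> free_lie" "a \<in> R \<or> b \<in> R \<or> c \<in> R"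
  shows "fa_comm3 a b c \<in> fa_bracket_sp (fa_bracket_sp R free_lie) free_lie"
proof -
  let ?RFF = "fa_bracket_sp (fa_bracket_sp R free_lie) free_lie"
  have mem: "fa_comm3 r x y \<in> ?RFF" if "r \<in> R" "x \<in> free_lie" "y \<in> free_lie" for r x y
    using fa_comm3_relator_mem that by blast
  have "fa_comm3 a b c = - fa_comm3 b a c" "fa_comm3 a b c = fa_comm3 c b a - fa_comm3 c a b"
    using fa_comm3_swap[of b a c] fa_comm3_jacobi[of a b c] fa_comm3_swap[of c b a] by simp_all
  then show ?thesis using assms mem[of a b c] mem[of b a c] mem[of c b a] mem[of c a b]
    fa.subspace_neg[OF subspace_fa_bracket_sp] fa.subspace_diff[OF subspace_fa_bracket_sp] by metis
qed

lemma fa_comm3_span_mem: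
  assumes M: "fa.subspace M" and gen: "\<And>a b c. a \<in> G \<Longrightarrow> b \<in> G \<Longrightarrow> c \<in> G \<Longrightarrow> fa_comm3 a b c \<in> M"
    and abc: "a \<in> fa.span G" "b \<in> fa.span G" "c \<in> fa.span G"
  shows "fa_comm3 a b c \<in> M"
proof -
  have lin3: "fa_comm3 a b c \<in> M" if "a \<in> G" "b \<in> G" "c \<in> fa.span G" for a b c
    by (rule fa_span_map_mem[OF M _ _ _ that(3), of "fa_comm3 a b"])
       (simp_all add: gen that fa_comm3_add fa_comm3_scale)
  have lin2: "fa_comm3 a b c \<in> M" if "a \<in> G" "b \<in> fa.span G" "c \<in> fa.span G" for a b c
    by (rule fa_span_map_mem[OF M _ _ _ that(2), of "\<lambda>b. fa_comm3 a b c"])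
       (simp_all add: lin3 that fa_comm3_add fa_comm3_scale)
  show ?thesis
    by (rule fa_span_map_mem[OF M _ _ _ abc(1), of "\<lambda>a. fa_comm3 a b c"])
       (simp_all add: lin2 abc fa_comm3_add fa_comm3_scale)
qed

text \<open>Index triples \<open>(j, i, k)\<close> with \<open>j < i\<close> and \<open>j \<le> k\<close>: the basic commutators
  \<open>[[x\<^sub>i,x\<^sub>j],x\<^sub>k]\<close> of weight 3 on \<open>n\<close> generators.\<close>
definition hall_triples :: "nat \<Rightarrow> (nat \<times> nat \<times> nat) set" where
  "hall_triples n = (SIGMA j:{..<n}. {j<..<n} \<times> {j..<n})"

definition hall_commutators :: "(nat \<Rightarrow> ('x list \<Rightarrow> 'k::field)) \<Rightarrow> nat \<Rightarrow> ('x list \<Rightarrow> 'k) set" where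
  "hall_commutators l n = (\<lambda>(j, i, k). fa_comm3 (l i) (l j) (l k)) ` hall_triples n"

lemma sum_pronic_times_3: "(\<Sum>j<(n::nat). j * (j + 1) * 3) = n * (n - 1) * (n + 1)"
proof (induction n)
  case (Suc n)
  then show ?case by (cases n) (simp_all add: algebra_simps)
qed simp

lemma finite_hall_triples: "finite (hall_triples n)"
  by (simp add: hall_triples_def)

lemma card_hall_triples: "card (hall_triples n) = n * (n - 1) * (n + 1) div 3"
proof -
  have "card (hall_triples n) = (\<Sum>j<n. (n - Suc j) * (n - j))"
    by (simp add: hall_triples_def card_cartesian_product)
  also have "\<dots> = (\<Sum>j<n. j * (j + 1))"
    using sum.nat_diff_reindex[of "\<lambda>j. j * (j + 1)" n]
    by (metis (no_types, lifting) Suc_diff_Suc Suc_eq_plus1 diff_Suc_Suc lessThan_iff sum.cong zero_less_diff)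
  also have "\<dots> = n * (n - 1) * (n + 1) div 3"
    using sum_pronic_times_3[of n] unfolding sum_distrib_right[symmetric]
    by (metis nonzero_mult_div_cancel_right zero_neq_numeral)
  finally show ?thesis .
qed

lemma finite_hall_commutators: "finite (hall_commutators l n)"
  unfolding hall_commutators_def using finite_hall_triples by (rule finite_imageI)

lemma card_hall_commutators_le: "card (hall_commutators l n) \<le> n * (n - 1) * (n + 1) div 3"
  unfolding hall_commutators_def card_hall_triples[symmetric]
  by (rule card_image_le[OF finite_hall_triples])

lemma fa_comm3_mem_span_hall_commutators:
  assumes "i < n" "j < n" "k < n"
  shows "fa_comm3 (l i) (l j) (l k) \<in> fa.span (hall_commutators l n)"
proof -
  have below: "fa_comm3 (l p) (l q) (l r) \<in> fa.span (hall_commutators l n)"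
    if "q < p" "p < n" "r < n" for p q r
  proof (cases "q \<le> r")
    case True
    then have "(q, p, r) \<in> hall_triples n" using that by (auto simp: hall_triples_def)
    then show ?thesis unfolding hall_commutators_def by (intro fa.span_base) force
  next
    case False
    then have "(r, q, p) \<in> hall_triples n" "(r, p, q) \<in> hall_triples n"
      using that by (auto simp: hall_triples_def)
    then have "fa_comm3 (l q) (l r) (l p) \<in> hall_commutators l n"
        "fa_comm3 (l p) (l r) (l q) \<in> hall_commutators l n"
      unfolding hall_commutators_def by force+
    moreover have "fa_comm3 (l p) (l q) (l r) = - fa_comm3 (l q) (l r) (l p) + fa_comm3 (l p) (l r) (l q)"
      using fa_comm3_jacobi[of "l p" "l q" "l r"] fa_comm3_swap[of "l p" "l r" "l q"] by simp
    ultimately show ?thesis by (metis fa.span_add fa.span_base fa.span_neg)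
  qed
  consider "j < i" | "i = j" | "i < j" by linarith
  then show ?thesis
  proof cases
    case 1 then show ?thesis using below assms by blast
  next
    case 2 then show ?thesis by (simp add: fa_comm3_def fa_comm_self fa_comm_zero_left fa.span_zero)
  next
    case 3
    then have "fa_comm3 (l j) (l i) (l k) \<in> fa.span (hall_commutators l n)"
      using below assms by blast
    then show ?thesis using fa_comm3_swap[of "l i" "l j" "l k"] fa.span_neg by metis
  qed
qed

lemma fa_bracket3_subset_span_hall_commutators:
  fixes R :: "('x list \<Rightarrow> 'k::field) set"
  assumes R: "R \<subseteq> free_lie" and l: "\<And>i. i < n \<Longrightarrow> l i \<in> free_lie"
    and gen: "free_lie \<subseteq> fa.span (l ` {..<n} \<union> R)"
  shows "fa_bracket_sp (fa_bracket_sp free_lie free_lie) free_lie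
    \<subseteq> fa.span (fa_bracket_sp (fa_bracket_sp R free_lie) free_lie \<union> hall_commutators l n)"
    (is "?F3 \<subseteq> ?M")
proof -
  let ?RFF = "fa_bracket_sp (fa_bracket_sp R free_lie) free_lie"
  let ?G = "l ` {..<n} \<union> R"
  have M: "fa.subspace ?M" by simp
  have RFF: "?RFF \<subseteq> ?M" using fa.span_superset by blast
  have GF: "?G \<subseteq> free_lie" using l R by blast
  have generators: "fa_comm3 a b c \<in> ?M" if "a \<in> ?G" "b \<in> ?G" "c \<in> ?G" for a b c
  proof (cases "a \<in> R \<or> b \<in> R \<or> c \<in> R")
    case True then show ?thesis using fa_comm3_relator_slot_mem[of a b c R] that GF RFF(1) by blast
  next
    case False
    then have "a \<in> l ` {..<n}" "b \<in> l ` {..<n}" "c \<in> l ` {..<n}" using that by auto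
    then obtain i j k where "i < n" "j < n" "k < n" "a = l i" "b = l j" "c = l k"
      by (metis imageE lessThan_iff)
    then show ?thesis
      using fa_comm3_mem_span_hall_commutators fa.span_mono[of "hall_commutators l n"] by blast
  qed
  have bracket2: "fa_comm u c \<in> ?M" if "u \<in> fa_bracket_sp free_lie free_lie" "c \<in> free_lie" for u c
    using that(1)[unfolded fa_bracket_sp_def fa_span_eq]
  proof (rule fa_span_map_mem[OF M, rotated 3, where f = "\<lambda>u. fa_comm u c"])
    fix w :: "'x list \<Rightarrow> 'k"
    assume "w \<in> {fa_comm a b |a b. a \<in> free_lie \<and> b \<in> free_lie}"
    then obtain a b where w: "w = fa_comm a b" "a \<in> free_lie" "b \<in> free_lie" by blast
    then have "fa_comm3 a b c \<in> ?M"
      by (intro fa_comm3_span_mem[OF M generators]) (use gen that(2) w(2,3) in blast)+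
    then show "fa_comm w c \<in> ?M" unfolding w(1) fa_comm3_def .
  qed (rule fa_comm_add_left, rule fa_comm_scale_left)
  show ?thesis
    unfolding fa_bracket_sp_def[of "fa_bracket_sp free_lie free_lie"] fa_span_eq
    by (rule fa.span_minimal[OF _ M]) (use bracket2 in blast)
qed

text \<open>Jacobi: \<open>[\<rho>,[u,v]] = [[\<rho>,u],v] - [[\<rho>,v],u]\<close>.\<close>
lemma fa_comm_relator_bracket_mem:
  fixes R :: "('x list \<Rightarrow> 'k::field) set"
  assumes \<rho>: "\<rho> \<in> R" and p: "p \<in> fa_bracket_sp free_lie free_lie"
  shows "fa_comm \<rho> p \<in> fa_bracket_sp (fa_bracket_sp R free_lie) free_lie"
  using p unfolding fa_bracket_sp_def[of free_lie] fa_span_eq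
proof (rule fa_span_map_mem[OF subspace_fa_bracket_sp, rotated 3])
  fix w :: "'x list \<Rightarrow> 'k"
  assume "w \<in> {fa_comm u v |u v. u \<in> free_lie \<and> v \<in> free_lie}"
  then obtain u v where w: "w = fa_comm u v" "u \<in> free_lie" "v \<in> free_lie" by blast
  have "fa_comm \<rho> w = fa_comm3 \<rho> u v - fa_comm3 \<rho> v u"
    using fa_comm3_jacobi[of u v \<rho>] fa_comm3_swap[of v \<rho> u] fa_comm_swap[of w \<rho>]
    unfolding w(1) fa_comm3_def by (metis minus_diff_eq minus_minus)
  then show "fa_comm \<rho> w \<in> fa_bracket_sp (fa_bracket_sp R free_lie) free_lie"
    using fa_comm3_relator_mem[OF \<rho>] w fa.subspace_diff[OF subspace_fa_bracket_sp] by metis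
qed (rule fa_comm_add_right, rule fa_comm_scale_right)

lemma fa_bracket3_spanning_set_card_less:
  fixes R :: "('x list \<Rightarrow> 'k::field) set"
  assumes R: "R \<subseteq> free_lie" and l: "\<And>i. i < n \<Longrightarrow> l i \<in> free_lie"
    and gen: "free_lie \<subseteq> fa.span (l ` {..<n} \<union> R)"
    and n: "n \<ge> 2" and last: "l (n - 1) \<in> fa_bracket_sp free_lie free_lie"
    and rel: "fa_comm (l (n - 1)) (l 0) \<in> R"
  obtains H where "finite H" "card H < n * (n - 1) * (n + 1) div 3"
    "fa_bracket_sp (fa_bracket_sp free_lie free_lie) free_lie
      \<subseteq> fa.span (fa_bracket_sp (fa_bracket_sp R free_lie) free_lie \<union> H)"
proof -
  let ?RFF = "fa_bracket_sp (fa_bracket_sp R free_lie) free_lie"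
  let ?t = "fa_comm3 (l (n - 1)) (l 0) (l (n - 1))"
  have "(0, n - 1, n - 1) \<in> hall_triples n" using n by (auto simp: hall_triples_def)
  then have tH: "?t \<in> hall_commutators l n" unfolding hall_commutators_def by force
  have tR: "?t \<in> ?RFF" unfolding fa_comm3_def using rel last by (rule fa_comm_relator_bracket_mem)
  have "fa.span (?RFF \<union> hall_commutators l n) \<subseteq> fa.span (?RFF \<union> (hall_commutators l n - {?t}))"
    using tR fa.span_superset[of "?RFF \<union> (hall_commutators l n - {?t})"]
    by (intro fa.span_minimal) auto
  moreover have "card (hall_commutators l n - {?t}) < n * (n - 1) * (n + 1) div 3"
    using card_Diff1_less[OF finite_hall_commutators tH] card_hall_commutators_le[of l n] by linarith
  ultimately show ?thesis
    using that[of "hall_commutators l n - {?t}"] fa_bracket3_subset_span_hall_commutators[OF R l gen]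
      finite_hall_commutators by blast
qed

section \<open>Lie algebras\<close>

text \<open>Coordinates with respect to a basis enumerated by \<open>{..<n}\<close>.\<close>
lemma linear_bij_abelian_carrier:
  fixes scale :: "'k::field \<Rightarrow> 'v::ab_group_add \<Rightarrow> 'v"
  assumes vs: "vector_space scale" and dim: "lie_dim_eq scale n"
  obtains f :: "'v \<Rightarrow> nat \<Rightarrow> 'k" where "bij_betw f UNIV (abelian_carrier n)"
    "\<And>x y. f (x + y) = (\<lambda>i. f x i + f y i)" "\<And>c x. f (scale c x) = (\<lambda>i. c * f x i)"
proof -
  interpret L: vector_space scale by (rule vs)
  define B where "B = L.extend_basis {}"
  have indB: "L.independent B" and spB: "L.span B = UNIV"
    unfolding B_def using L.independent_extend_basis[OF L.independent_empty]
      L.span_extend_basis[OF L.independent_empty] by auto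
  note fB = L.finite_card_basis_if_dim_eq(1)[OF dim indB spB]
  have "card B = n" by (rule L.finite_card_basis_if_dim_eq(2)[OF dim indB spB])
  then obtain h where h: "bij_betw h {..<n} B"
    using ex_bij_betw_nat_finite[OF fB] by (auto simp: lessThan_atLeast0)
  have hinj: "inj_on h {..<n}" and himg: "h ` {..<n} = B"
    using h by (auto simp: bij_betw_def)
  define R where "R x = L.representation B x" for x
  define f where "f x = (\<lambda>i. if i < n then R x (h i) else 0)" for x
  have inS: "x \<in> L.span B" for x using spB by auto
  have fadd: "f (x + y) = (\<lambda>i. f x i + f y i)" for x y
    by (auto simp: f_def R_def L.representation_add[OF indB inS inS] fun_eq_iff)
  have fscale: "f (scale c x) = (\<lambda>i. c * f x i)" for c x
    by (auto simp: f_def R_def L.representation_scale[OF indB inS] fun_eq_iff)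
  have repr: "x = (\<Sum>b\<in>B. scale (R x b) b)" for x
    unfolding R_def using L.sum_representation_eq[OF indB inS fB] by simp
  have "inj f"
  proof (rule injI)
    fix x y assume e: "f x = f y"
    have "R x b = R y b" for b
    proof (cases "b \<in> B")
      case True
      then obtain i where "i < n" "b = h i" using himg by auto
      then show ?thesis using fun_cong[OF e, of i] by (simp add: f_def)
    next
      case False
      then show ?thesis using L.representation_ne_zero[of B x b] L.representation_ne_zero[of B y b]
        by (metis R_def)
    qed
    then show "x = y" using repr[of x] repr[of y] by simp
  qed
  moreover have "range f = abelian_carrier n"
  proof
    show "range f \<subseteq> abelian_carrier n" by (auto simp: f_def abelian_carrier_def)
    show "abelian_carrier n \<subseteq> range f"
    proof
      fix v :: "nat \<Rightarrow> 'k" assume v: "v \<in> abelian_carrier n"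
      have "f (\<Sum>i<n. scale (v i) (h i)) = v"
        using v L.representation_sum_scale_basis[OF indB hinj] himg
        by (auto simp: f_def R_def abelian_carrier_def fun_eq_iff)
      then show "v \<in> range f" by (metis rangeI)
    qed
  qed
  ultimately have "bij_betw f UNIV (abelian_carrier n)" by (simp add: bij_betw_def)
  then show ?thesis using fadd fscale by (rule that)
qed

lemma iso_to_abelian_if_abelian:
  fixes scale :: "'k::field \<Rightarrow> 'v::ab_group_add \<Rightarrow> 'v" and br :: "'v \<Rightarrow> 'v \<Rightarrow> 'v"
  assumes vs: "vector_space scale" and dim: "lie_dim_eq scale n" and ab: "\<And>x y. br x y = 0"
  shows "iso_to_abelian scale br n"
proof -
  interpret L: vector_space scale by (rule vs)
  obtain f :: "'v \<Rightarrow> nat \<Rightarrow> 'k" where f: "bij_betw f UNIV (abelian_carrier n)"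
    "\<And>x y. f (x + y) = (\<lambda>i. f x i + f y i)" "\<And>c x. f (scale c x) = (\<lambda>i. c * f x i)"
    using linear_bij_abelian_carrier[OF vs dim] by blast
  have "f 0 = (\<lambda>i. 0)" using f(3)[of 0 0] by simp
  then show ?thesis unfolding iso_to_abelian_def ab using f by blast
qed

lemma spanning_family_ending_with:
  fixes scale :: "'k::field \<Rightarrow> 'v::ab_group_add \<Rightarrow> 'v"
  assumes vs: "vector_space scale" and dim: "lie_dim_eq scale n" and z: "z \<noteq> 0"
  shows "\<exists>e. e (n - 1) = z \<and> module.span scale (e ` {..<n}) = UNIV"
proof -
  interpret L: vector_space scale by (rule vs)
  have iz: "L.independent {z}"
    using L.independent_insertI[of z "{}"] z by auto
  define B where "B = L.extend_basis {z}"
  have indB: "L.independent B" and spB: "L.span B = UNIV" and zB: "z \<in> B"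
    unfolding B_def using L.independent_extend_basis[OF iz] L.span_extend_basis[OF iz]
      L.extend_basis_superset[OF iz] by auto
  note fB = L.finite_card_basis_if_dim_eq(1)[OF dim indB spB]
  have cB: "card B = n" by (rule L.finite_card_basis_if_dim_eq(2)[OF dim indB spB])
  then have n: "n \<ge> 1" using zB fB card_0_eq by fastforce
  obtain g where g: "bij_betw g {..<n - 1} (B - {z})"
    using ex_bij_betw_nat_finite[of "B - {z}"] fB cB zB by (auto simp: lessThan_atLeast0)
  define e where "e i = (if i < n - 1 then g i else z)" for i
  have "B \<subseteq> e ` {..<n}"
  proof
    fix x assume x: "x \<in> B"
    show "x \<in> e ` {..<n}"
    proof (cases "x = z")
      case True then show ?thesis using n by (intro image_eqI[of _ _ "n - 1"]) (auto simp: e_def)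
    next
      case False
      then have "x \<in> g ` {..<n - 1}" using g x unfolding bij_betw_def by blast
      then obtain i where "i < n - 1" "g i = x" by auto
      then show ?thesis by (intro image_eqI[of _ _ i]) (auto simp: e_def)
    qed
  qed
  then have "L.span (e ` {..<n}) = UNIV" using spB L.span_mono by blast
  then show ?thesis by (intro exI[of _ e]) (simp add: e_def)
qed

lemma lie_dim_ge_2_if_nonabelian:
  fixes scale :: "'k::field \<Rightarrow> 'v::ab_group_add \<Rightarrow> 'v"
  assumes lie: "lie_algebra scale br" and dim: "lie_dim_eq scale n" and nab: "br x y \<noteq> 0"
  shows "n \<ge> 2"
proof (rule ccontr)
  interpret L: vector_space scale using lie by (simp add: lie_algebra_def)
  assume "\<not> n \<ge> 2"
  have "br (scale 0 x) y = scale 0 (br x y)" using lie unfolding lie_algebra_def by blast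
  then have "x \<noteq> 0" using nab by auto
  then obtain e where e: "e (n - 1) = x" "L.span (e ` {..<n}) = UNIV"
    using spanning_family_ending_with[OF L.vector_space_axioms dim] by blast
  have "{..<n} \<subseteq> {n - 1}" using \<open>\<not> n \<ge> 2\<close> by auto
  then have "e ` {..<n} \<subseteq> {x}" using e(1) by auto
  then have "y \<in> L.span {x}" using e(2) L.span_mono by blast
  then obtain a where "y = scale a x" unfolding L.span_singleton by blast
  then have "br x y = scale a (br x x)" using lie by (simp add: lie_algebra_def)
  then show False using nab lie by (simp add: lie_algebra_def)
qed

context
  fixes scale :: "'k::field \<Rightarrow> 'v::ab_group_add \<Rightarrow> 'v" and br :: "'v \<Rightarrow> 'v \<Rightarrow> 'v"
  assumes vs: "vector_space scale"
begin

interpretation L: vector_space scale by (rule vs)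

lemma lower_central_Suc_subset: "lower_central scale br (Suc i) \<subseteq> lower_central scale br i"
proof (induction i)
  case (Suc i)
  then show ?case by (simp only: lower_central.simps) (intro L.span_mono, blast)
qed simp

lemma zero_in_lower_central: "0 \<in> lower_central scale br i"
  by (cases i) (auto intro: L.span_zero)

lemma last_nonzero_lower_central:
  assumes "lower_central scale br k \<noteq> {0}" "lower_central scale br (k + d) = {0}"
  shows "\<exists>m\<ge>k. lower_central scale br m \<noteq> {0} \<and> lower_central scale br (Suc m) = {0}"
  using assms
proof (induction d arbitrary: k)
  case (Suc d)
  show ?case
  proof (cases "lower_central scale br (Suc k) = {0}")
    case False
    with Suc.IH[OF False] Suc.prems(2) show ?thesis by (metis add_Suc_shift Suc_leD)
  qed (use Suc.prems in blast)
qed simp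

text \<open>Any nonzero element of the last nonzero term of the lower central series is central; that
  term lies in \<open>L\<^sup>2 = lower_central scale br 1\<close> because \<open>L\<close> is not abelian.\<close>
lemma nilpotent_nonabelian_central_commutator:
  assumes nil: "lie_nilpotent scale br" and nab: "br x0 y0 \<noteq> 0"
  shows "\<exists>z. z \<noteq> 0 \<and> z \<in> lower_central scale br 1 \<and> (\<forall>y. br z y = 0)"
proof -
  obtain c where c: "lower_central scale br c = {0}" using nil by (auto simp: lie_nilpotent_def)
  have "br x0 y0 \<in> lower_central scale br 1" by (auto intro!: L.span_base)
  then have ne1: "lower_central scale br 1 \<noteq> {0}" using nab by auto
  have "c \<noteq> 0"
  proof
    assume "c = 0"
    then show False using c nab by (metis UNIV_I lower_central.simps(1) singletonD)
  qed
  then obtain m where m: "m \<ge> 1" "lower_central scale br m \<noteq> {0}" "lower_central scale br (Suc m) = {0}"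
    using last_nonzero_lower_central[OF ne1, of "c - 1"] c by auto
  obtain z where z: "z \<in> lower_central scale br m" "z \<noteq> 0" using m(2) zero_in_lower_central[of m] by blast
  have "br z y \<in> lower_central scale br (Suc m)" for y
    using z(1) by (auto intro!: L.span_base)
  then have "\<forall>y. br z y = 0" using m(3) by auto
  moreover have "z \<in> lower_central scale br 1"
    using lift_Suc_antimono_le[of "lower_central scale br", OF lower_central_Suc_subset m(1)] z(1) by auto
  ultimately show ?thesis using z(2) by blast
qed

end

section \<open>Free presentations\<close>

context
  fixes scale :: "'k::field \<Rightarrow> 'v::ab_group_add \<Rightarrow> 'v" and br :: "'v \<Rightarrow> 'v \<Rightarrow> 'v"
    and \<pi> :: "('x list \<Rightarrow> 'k) \<Rightarrow> 'v"
  assumes lie: "lie_algebra scale br" and pres: "free_presentation scale br \<pi>"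
begin

interpretation L: vector_space scale using lie by (simp add: lie_algebra_def)

lemma presentation_add: "p \<in> free_lie \<Longrightarrow> q \<in> free_lie \<Longrightarrow> \<pi> (p + q) = \<pi> p + \<pi> q"
  using pres by (simp add: free_presentation_def fa_add_eq)

lemma presentation_scale: "p \<in> free_lie \<Longrightarrow> \<pi> (fa_scale c p) = scale c (\<pi> p)"
  using pres by (simp add: free_presentation_def)

lemma presentation_comm: "p \<in> free_lie \<Longrightarrow> q \<in> free_lie \<Longrightarrow> \<pi> (fa_comm p q) = br (\<pi> p) (\<pi> q)"
  using pres by (simp add: free_presentation_def)

lemma presentation_surj: "\<exists>p\<in>free_lie. \<pi> p = v"
  using pres unfolding free_presentation_def by (metis UNIV_I imageE)

lemma presentation_zero: "\<pi> 0 = 0"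
proof -
  have "\<pi> 0 = \<pi> (fa_scale 0 0)" by (simp only: fa.scale_zero_left)
  also have "\<dots> = scale 0 (\<pi> 0)" by (rule presentation_scale[OF free_lie_zero])
  finally show ?thesis by simp
qed

lemma presentation_diff:
  assumes "p \<in> free_lie" "q \<in> free_lie"
  shows "\<pi> (p - q) = \<pi> p - \<pi> q"
proof -
  have "p - q \<in> free_lie" using assms by (rule free_lie_diff)
  then have "\<pi> (q + (p - q)) = \<pi> q + \<pi> (p - q)" using assms(2) presentation_add by blast
  then show ?thesis by (simp add: eq_diff_eq)
qed

lemma presentation_lift_derived:
  assumes "v \<in> lower_central scale br 1"
  shows "\<exists>p\<in>fa_bracket_sp free_lie free_lie. \<pi> p = v"
  using assms unfolding One_nat_def lower_central.simps
proof (induction rule: L.span_induct_alt)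
  case base
  have "0 \<in> fa_bracket_sp free_lie free_lie"
    unfolding fa_bracket_sp_def using fa_span.zero by (simp add: zero_fun_def)
  then show ?case using presentation_zero by blast
next
  case (step c x y)
  obtain a b where x: "x = br a b" using step(1) by blast
  obtain pa pb where pab: "pa \<in> free_lie" "\<pi> pa = a" "pb \<in> free_lie" "\<pi> pb = b"
    using presentation_surj by metis
  obtain py where py: "py \<in> fa_bracket_sp free_lie free_lie" "\<pi> py = y" using step(2) by blast
  define p where "p = fa_scale c (fa_comm pa pb) + py"
  have "p \<in> fa_bracket_sp free_lie free_lie"
    unfolding p_def using py(1) pab unfolding fa_bracket_sp_def fa_add_eq[symmetric]
    by (blast intro: fa_span.add fa_span.scale fa_span.base)
  moreover have "\<pi> p = scale c x + y"
  proof -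
    have comm: "fa_comm pa pb \<in> free_lie" using pab by (simp add: free_lie.comm)
    have "\<pi> p = \<pi> (fa_scale c (fa_comm pa pb)) + \<pi> py"
      unfolding p_def using comm py(1) fa_bracket_sp_free_lie_subset
      by (blast intro: presentation_add free_lie.scale)
    then show ?thesis by (simp only: presentation_scale[OF comm] presentation_comm pab py(2) x)
  qed
  ultimately show ?case by blast
qed

lemma free_lie_subset_span_lifts:
  assumes span: "L.span (e ` I) = UNIV" and l: "\<And>i. i \<in> I \<Longrightarrow> l i \<in> free_lie \<and> \<pi> (l i) = e i"
  shows "free_lie \<subseteq> fa.span (l ` I \<union> {p \<in> free_lie. \<pi> p = 0})"
proof
  fix p :: "'x list \<Rightarrow> 'k"
  assume p: "p \<in> free_lie"
  have "\<exists>q\<in>free_lie. q \<in> fa.span (l ` I) \<and> \<pi> q = v" if "v \<in> L.span (e ` I)" for v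
    using that
  proof (induction rule: L.span_induct_alt)
    case base
    then show ?case using presentation_zero free_lie_zero fa.span_zero by blast
  next
    case (step c x y)
    obtain i where i: "i \<in> I" "x = e i" using step(1) by blast
    obtain qy where qy: "qy \<in> free_lie" "qy \<in> fa.span (l ` I)" "\<pi> qy = y" using step(2) by blast
    have li: "l i \<in> free_lie" "\<pi> (l i) = x" using l i by auto
    have "fa_scale c (l i) + qy \<in> free_lie" using li qy by (simp add: free_lie_add free_lie.scale)
    moreover have "fa_scale c (l i) + qy \<in> fa.span (l ` I)"
      using i qy by (intro fa.span_add fa.span_scale) (auto intro: fa.span_base)
    moreover have "\<pi> (fa_scale c (l i) + qy) = scale c x + y"
      using li qy by (simp only: presentation_add presentation_scale free_lie.scale)
    ultimately show ?case by blast
  qed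
  then obtain q where q: "q \<in> free_lie" "q \<in> fa.span (l ` I)" "\<pi> q = \<pi> p"
    using span by blast
  have "p - q \<in> fa.span (l ` I \<union> {p \<in> free_lie. \<pi> p = 0})"
    using p q by (auto simp: free_lie_diff presentation_diff intro: fa.span_base)
  moreover have "q \<in> fa.span (l ` I \<union> {p \<in> free_lie. \<pi> p = 0})"
    using q(2) fa.span_mono[of "l ` I"] by blast
  ultimately show "p \<in> fa.span (l ` I \<union> {p \<in> free_lie. \<pi> p = 0})"
    using fa.span_add by fastforce
qed

lemma two_nilpotent_multiplier_dim_less_if_nonabelian:
  assumes dim: "lie_dim_eq scale n" and nil: "lie_nilpotent scale br" and nab: "br x0 y0 \<noteq> 0"
    and mult: "two_nilpotent_multiplier_dim_eq scale br \<pi> m"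
  shows "m < n * (n - 1) * (n + 1) div 3"
proof -
  obtain z where z: "z \<noteq> 0" "z \<in> lower_central scale br 1" "\<forall>y. br z y = 0"
    using nilpotent_nonabelian_central_commutator[OF L.vector_space_axioms nil nab] by blast
  obtain e where e: "e (n - 1) = z" "L.span (e ` {..<n}) = UNIV"
    using spanning_family_ending_with[OF L.vector_space_axioms dim z(1)] by blast
  obtain pz where pz: "pz \<in> fa_bracket_sp free_lie free_lie" "\<pi> pz = z"
    using presentation_lift_derived z(2) by blast
  have "\<forall>i. \<exists>p. p \<in> free_lie \<and> \<pi> p = e i" using presentation_surj by blast
  then obtain l0 where l0: "\<And>i. l0 i \<in> free_lie \<and> \<pi> (l0 i) = e i" by metis
  define l where "l i = (if i = n - 1 then pz else l0 i)" for i
  have l: "l i \<in> free_lie \<and> \<pi> (l i) = e i" for i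
    using l0 pz fa_bracket_sp_free_lie_subset e(1) by (auto simp: l_def)
  define R where "R = {p \<in> free_lie. \<pi> p = (0 :: 'v)}"
  have gen: "free_lie \<subseteq> fa.span (l ` {..<n} \<union> R)"
    unfolding R_def by (rule free_lie_subset_span_lifts[OF e(2)]) (use l in blast)
  have rel: "fa_comm (l (n - 1)) (l 0) \<in> R"
    using l[of "n - 1"] l[of 0] e(1) z(3) by (simp add: R_def presentation_comm free_lie.comm)
  obtain H where H: "finite H" "card H < n * (n - 1) * (n + 1) div 3"
    "fa_bracket_sp (fa_bracket_sp free_lie free_lie) free_lie
      \<subseteq> fa.span (fa_bracket_sp (fa_bracket_sp R free_lie) free_lie \<union> H)"
  proof (rule fa_bracket3_spanning_set_card_less[OF _ _ gen lie_dim_ge_2_if_nonabelian[OF lie dim nab] _ rel])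
    show "R \<subseteq> free_lie" by (auto simp: R_def)
    show "l i \<in> free_lie" for i using l by blast
    show "l (n - 1) \<in> fa_bracket_sp free_lie free_lie" using pz(1) by (simp add: l_def)
  qed
  obtain S where S: "S \<subseteq> fa_bracket_sp (fa_bracket_sp free_lie free_lie) free_lie" "finite S" "card S = m"
    and ind: "\<forall>c. (\<lambda>w. \<Sum>s\<in>S. c s * s w) \<in> fa_bracket_sp (fa_bracket_sp R free_lie) free_lie
      \<longrightarrow> (\<forall>s\<in>S. c s = 0)"
    using mult unfolding two_nilpotent_multiplier_dim_eq_def Let_def fa_quot_dim_eq_def R_def by blast
  have "\<forall>s\<in>S. c s = 0" if "(\<Sum>s\<in>S. fa_scale (c s) s) \<in> fa_bracket_sp (fa_bracket_sp R free_lie) free_lie"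
    for c using ind that by (simp add: fa_sum_scale_eq)
  then have "m \<le> card H"
    using fa.card_le_if_independent_modulo[OF subspace_fa_bracket_sp S(2) H(1)] S(1,3) H(3) by blast
  then show ?thesis using H(2) by linarith
qed

end

theorem corollary2p15:
  fixes scale :: "'k::field \<Rightarrow> 'v::ab_group_add \<Rightarrow> 'v"
    and br :: "'v \<Rightarrow> 'v \<Rightarrow> 'v"
    and \<pi> :: "('x list \<Rightarrow> 'k) \<Rightarrow> 'v"
    and n :: nat
  assumes "lie_algebra scale br"
    and "lie_dim_eq scale n"
    and "lie_nilpotent scale br"
    and "free_presentation scale br \<pi>"
    and "two_nilpotent_multiplier_dim_eq scale br \<pi> (n * (n - 1) * (n + 1) div 3)"
  shows "iso_to_abelian scale br n"
proof (cases "\<forall>x y. br x y = 0")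
  case True
  then show ?thesis
    using assms(1,2) unfolding lie_algebra_def by (blast intro: iso_to_abelian_if_abelian)
next
  case False
  then obtain x0 y0 where "br x0 y0 \<noteq> 0" by blast
  then show ?thesis
    using two_nilpotent_multiplier_dim_less_if_nonabelian[OF assms(1,4,2,3)] assms(5) by blast
qed

end
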